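(* For all integers $n\geq2$, $\|W_n^+-W_n^-\|_{\mathrm{cb}}=2$.
   Context: The Holevo–Werner channels on $M_n(\mathbb{C})$ are $W_n^+(x)=\frac{1}{n+1}(\mathrm{Tr}_n(x)1_n+x^t)$ and $W_n^-(x)=\frac{1}{n-1}(\mathrm{Tr}_n(x)1_n-x^t)$, where $\mathrm{Tr}_n$ is the non-normalized trace and $x^t$ the transpose; $\|\cdot\|_{\mathrm{cb}}$ is the completely bounded norm. *)

theory Defs
  imports Complex_Main "HOL-Library.Extended_Real"
begin

text \<open>Complex matrices of size d x d are represented as functions nat => nat => complex,
  of which only the entries with indices < d are meaningful.\<close>
type_synonym cmatrix = "nat \<Rightarrow> nat \<Rightarrow> complex"

definition mat_op_norm :: "nat \<Rightarrow> cmatrix \<Rightarrow> real" where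
  "mat_op_norm d A = Sup {sqrt (\<Sum>i<d. (cmod (\<Sum>j<d. A i j * x j))\<^sup>2) | x :: nat \<Rightarrow> complex.
                           (\<Sum>j<d. (cmod (x j))\<^sup>2) \<le> 1}"

definition mtrace :: "nat \<Rightarrow> cmatrix \<Rightarrow> complex" where
  "mtrace n x = (\<Sum>i<n. x i i)"

definition HW_plus :: "nat \<Rightarrow> cmatrix \<Rightarrow> cmatrix" where
  "HW_plus n x = (\<lambda>i j. (mtrace n x * (if i = j then 1 else 0) + x j i) / (of_nat n + 1))"

definition HW_minus :: "nat \<Rightarrow> cmatrix \<Rightarrow> cmatrix" where
  "HW_minus n x = (\<lambda>i j. (mtrace n x * (if i = j then 1 else 0) - x j i) / (of_nat n - 1))"

text \<open>Amplification id_k \<otimes> Phi : M_k(M_n) -> M_k(M_n), where M_k(M_n) is identified with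
  M_{kn}(C); block (a,b) consists of the entries with row a*n+i and column b*n+j (i,j < n).\<close>
definition ampl :: "nat \<Rightarrow> (cmatrix \<Rightarrow> cmatrix) \<Rightarrow> cmatrix \<Rightarrow> cmatrix" where
  "ampl n Phi X = (\<lambda>p q. Phi (\<lambda>i j. if i < n \<and> j < n then X (p div n * n + i) (q div n * n + j) else 0)
                           (p mod n) (q mod n))"

definition ampl_norm :: "nat \<Rightarrow> nat \<Rightarrow> (cmatrix \<Rightarrow> cmatrix) \<Rightarrow> real" where
  "ampl_norm k n Phi = Sup {mat_op_norm (k * n) (ampl n Phi X) | X. mat_op_norm (k * n) X \<le> 1}"

definition cb_norm :: "nat \<Rightarrow> (cmatrix \<Rightarrow> cmatrix) \<Rightarrow> ereal" where
  "cb_norm n Phi = (SUP k\<in>{1..}. ereal (ampl_norm k n Phi))"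

end

theory Submission
  imports Defs "HOL-Analysis.L2_Norm"
begin

text \<open>
  For the upper bound, the matrix coefficient \<open>\<langle>U, (id\<^sub>k \<otimes> (W\<^sup>+ - W\<^sup>-))(X) V\<rangle>\<close> equals
  \<open>(T\<^sub>1 + T\<^sub>2)/(n+1) - (T\<^sub>1 - T\<^sub>2)/(n-1)\<close>, where \<open>T\<^sub>1\<close> and \<open>T\<^sub>2\<close> are the bilinear forms
  coming from the trace part and the transpose part of the channels. Averaging
  \<open>\<langle>K U, X K V\<rangle>\<close> over the Kraus operators \<open>K = 1 \<otimes> (E\<^sub>t\<^sub>s \<plusminus> E\<^sub>s\<^sub>t)\<close> of the Werner channels gives
  \<open>|T\<^sub>1 \<plusminus> T\<^sub>2| \<le> (n \<plusminus> 1) \<parallel>U\<parallel> \<parallel>V\<parallel>\<close> for every contraction \<open>X\<close>, so each of the two terms is at most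
  \<open>\<parallel>U\<parallel> \<parallel>V\<parallel>\<close> and every amplification has norm at most 2. For the lower bound, at level
  \<open>k = n\<close> the flip unitary is mapped to a matrix having the maximally entangled vector
  \<open>\<Sum>\<^sub>i e\<^sub>i \<otimes> e\<^sub>i\<close> as an eigenvector with eigenvalue 2.
\<close>

definition sqnorm :: "nat \<Rightarrow> (nat \<Rightarrow> complex) \<Rightarrow> real" where
  "sqnorm d z = (\<Sum>j<d. (cmod (z j))\<^sup>2)"

definition mat_vec :: "nat \<Rightarrow> cmatrix \<Rightarrow> (nat \<Rightarrow> complex) \<Rightarrow> nat \<Rightarrow> complex" where
  "mat_vec d A z = (\<lambda>i. \<Sum>j<d. A i j * z j)"

lemma sqnorm_nonneg [simp]: "0 \<le> sqnorm d z"
  unfolding sqnorm_def by (simp add: sum_nonneg)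

lemma sqnorm_scale: "sqnorm d (\<lambda>j. c * z j) = (cmod c)\<^sup>2 * sqnorm d z"
  by (simp add: sqnorm_def norm_mult power_mult_distrib sum_distrib_left)

lemma mat_vec_scale: "mat_vec d A (\<lambda>j. c * z j) = (\<lambda>i. c * mat_vec d A z i)"
  by (simp add: mat_vec_def sum_distrib_left algebra_simps)

lemma cmod_sum_mult_le:
  "cmod (\<Sum>j\<in>S. a j * b j) \<le> sqrt (\<Sum>j\<in>S. (cmod (a j))\<^sup>2) * sqrt (\<Sum>j\<in>S. (cmod (b j))\<^sup>2)"
proof -
  have "cmod (\<Sum>j\<in>S. a j * b j) \<le> (\<Sum>j\<in>S. \<bar>cmod (a j)\<bar> * \<bar>cmod (b j)\<bar>)"
    by (rule order_trans[OF norm_sum]) (simp add: norm_mult)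
  also have "\<dots> \<le> L2_set (\<lambda>j. cmod (a j)) S * L2_set (\<lambda>j. cmod (b j)) S"
    by (rule L2_set_mult_ineq)
  finally show ?thesis by (simp add: L2_set_def)
qed

lemma sqnorm_mat_vec_le_Hilbert_Schmidt:
  "sqnorm d (mat_vec d A x) \<le> (\<Sum>i<d. \<Sum>j<d. (cmod (A i j))\<^sup>2) * sqnorm d x"
proof -
  have "(cmod (\<Sum>j<d. A i j * x j))\<^sup>2 \<le> (\<Sum>j<d. (cmod (A i j))\<^sup>2) * sqnorm d x" for i
  proof -
    have "cmod (\<Sum>j<d. A i j * x j) \<le> sqrt (\<Sum>j<d. (cmod (A i j))\<^sup>2) * sqrt (sqnorm d x)"
      unfolding sqnorm_def by (rule cmod_sum_mult_le)
    then have "(cmod (\<Sum>j<d. A i j * x j))\<^sup>2 \<le> (sqrt (\<Sum>j<d. (cmod (A i j))\<^sup>2) * sqrt (sqnorm d x))\<^sup>2"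
      by (simp add: power_mono)
    then show ?thesis by (simp add: power_mult_distrib sum_nonneg)
  qed
  then have "(\<Sum>i<d. (cmod (\<Sum>j<d. A i j * x j))\<^sup>2) \<le> (\<Sum>i<d. (\<Sum>j<d. (cmod (A i j))\<^sup>2) * sqnorm d x)"
    by (intro sum_mono)
  moreover have "sqnorm d (mat_vec d A x) = (\<Sum>i<d. (cmod (\<Sum>j<d. A i j * x j))\<^sup>2)"
    by (simp add: sqnorm_def mat_vec_def)
  ultimately show ?thesis by (simp add: sum_distrib_right)
qed

lemma mat_op_norm_eq: "mat_op_norm d A = Sup {sqrt (sqnorm d (mat_vec d A x)) | x. sqnorm d x \<le> 1}"
  unfolding mat_op_norm_def sqnorm_def mat_vec_def by simp

lemma norm_mat_vec_le_unit:
  assumes "sqnorm d x \<le> 1"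
  shows "sqrt (sqnorm d (mat_vec d A x)) \<le> mat_op_norm d A"
proof -
  let ?H = "\<Sum>i<d. \<Sum>j<d. (cmod (A i j))\<^sup>2"
  have "sqrt (sqnorm d (mat_vec d A y)) \<le> sqrt ?H" if "sqnorm d y \<le> 1" for y
  proof -
    have "sqnorm d (mat_vec d A y) \<le> ?H * sqnorm d y" by (rule sqnorm_mat_vec_le_Hilbert_Schmidt)
    also have "\<dots> \<le> ?H" using that by (simp add: mult_left_le sum_nonneg)
    finally show ?thesis by simp
  qed
  then have "bdd_above {sqrt (sqnorm d (mat_vec d A y)) | y. sqnorm d y \<le> 1}"
    by (intro bdd_aboveI) blast
  then show ?thesis
    unfolding mat_op_norm_eq by (rule cSup_upper[rotated]) (use assms in blast)
qed

lemma mat_op_norm_leI: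
  assumes "0 \<le> c" "\<And>v. sqnorm d (mat_vec d A v) \<le> c\<^sup>2 * sqnorm d v"
  shows "mat_op_norm d A \<le> c"
  unfolding mat_op_norm_eq
proof (rule cSup_least)
  have "sqnorm d (\<lambda>_. 0) \<le> 1" by (simp add: sqnorm_def)
  then show "{sqrt (sqnorm d (mat_vec d A x)) |x. sqnorm d x \<le> 1} \<noteq> {}" by blast
next
  fix y assume "y \<in> {sqrt (sqnorm d (mat_vec d A x)) |x. sqnorm d x \<le> 1}"
  then obtain x where y: "y = sqrt (sqnorm d (mat_vec d A x))" and x: "sqnorm d x \<le> 1" by blast
  have "sqnorm d (mat_vec d A x) \<le> c\<^sup>2 * sqnorm d x" by (rule assms(2))
  also have "\<dots> \<le> c\<^sup>2" using x by (simp add: mult_left_le)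
  finally show "y \<le> c" using y assms(1) real_le_lsqrt by auto
qed

lemma mat_op_norm_nonneg: "0 \<le> mat_op_norm d A"
  using norm_mat_vec_le_unit[of d "\<lambda>_. 0" A] by (simp add: sqnorm_def mat_vec_def)

lemma norm_mat_vec_le: "sqrt (sqnorm d (mat_vec d A z)) \<le> mat_op_norm d A * sqrt (sqnorm d z)"
proof (cases "sqnorm d z = 0")
  case True
  then have "\<forall>j\<in>{..<d}. (cmod (z j))\<^sup>2 = 0"
    unfolding sqnorm_def by (subst sum_nonneg_eq_0_iff[symmetric]) auto
  then have "mat_vec d A z = (\<lambda>_. 0)" by (simp add: mat_vec_def)
  then show ?thesis by (simp add: sqnorm_def mat_op_norm_nonneg sum_nonneg)
next
  case False
  define s where "s = sqrt (sqnorm d z)"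
  have s: "0 < s" "s\<^sup>2 = sqnorm d z"
    using False sqnorm_nonneg[of d z] by (auto simp: s_def order_less_le)
  define x where "x = (\<lambda>j. complex_of_real (1/s) * z j)"
  have "sqnorm d x = 1"
    unfolding x_def sqnorm_scale using s False by (simp add: norm_divide power_divide)
  then have "sqrt (sqnorm d (mat_vec d A x)) \<le> mat_op_norm d A"
    by (intro norm_mat_vec_le_unit) simp
  moreover have "sqrt (sqnorm d (mat_vec d A x)) = sqrt (sqnorm d (mat_vec d A z)) / s"
    unfolding x_def mat_vec_scale sqnorm_scale using s
    by (simp add: norm_divide power_divide real_sqrt_divide s_def)
  ultimately show ?thesis using s by (simp add: s_def divide_le_eq)
qed

lemma mat_op_norm_geI:
  assumes "0 < sqnorm d z" "c * sqrt (sqnorm d z) \<le> sqrt (sqnorm d (mat_vec d A z))"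
  shows "c \<le> mat_op_norm d A"
  using order_trans[OF assms(2) norm_mat_vec_le] assms(1) by simp

lemma inner_mat_vec_le:
  assumes "mat_op_norm d A \<le> 1"
  shows "cmod (\<Sum>p<d. cnj (w p) * mat_vec d A z p) \<le> sqrt (sqnorm d w) * sqrt (sqnorm d z)"
proof -
  have "cmod (\<Sum>p<d. cnj (w p) * mat_vec d A z p) \<le> sqrt (sqnorm d w) * sqrt (sqnorm d (mat_vec d A z))"
    using cmod_sum_mult_le[of "\<lambda>p. cnj (w p)" "mat_vec d A z" "{..<d}"] by (simp add: sqnorm_def)
  also have "\<dots> \<le> sqrt (sqnorm d w) * sqrt (sqnorm d z)"
  proof (rule mult_left_mono)
    have "mat_op_norm d A * sqrt (sqnorm d z) \<le> sqrt (sqnorm d z)"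
      using assms by (simp add: mult_left_le_one_le mat_op_norm_nonneg)
    then show "sqrt (sqnorm d (mat_vec d A z)) \<le> sqrt (sqnorm d z)"
      using norm_mat_vec_le[of d A z] by linarith
  qed simp
  finally show ?thesis .
qed

lemma mat_op_norm_le_by_inner:
  assumes "0 \<le> c"
    and "\<And>w z. cmod (\<Sum>p<d. cnj (w p) * mat_vec d A z p) \<le> c * sqrt (sqnorm d w) * sqrt (sqnorm d z)"
  shows "mat_op_norm d A \<le> c"
proof (rule mat_op_norm_leI[OF assms(1)])
  fix v
  define u where "u = mat_vec d A v"
  have "(\<Sum>p<d. cnj (u p) * u p) = complex_of_real (sqnorm d u)"
    by (simp add: sqnorm_def mult.commute flip: complex_norm_square)
  then have "sqnorm d u \<le> c * sqrt (sqnorm d u) * sqrt (sqnorm d v)"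
    using assms(2)[of u v] by (simp add: u_def)
  then have prod: "sqrt (sqnorm d u) * sqrt (sqnorm d u) \<le> sqrt (sqnorm d u) * (c * sqrt (sqnorm d v))"
    by (simp add: algebra_simps)
  have "sqrt (sqnorm d u) \<le> c * sqrt (sqnorm d v)"
  proof (cases "sqnorm d u = 0")
    case False
    then have "0 < sqrt (sqnorm d u)"
      using sqnorm_nonneg[of d u] by (simp add: order_less_le)
    with prod show ?thesis by (rule mult_left_le_imp_le)
  qed (use assms(1) in simp)
  then have "(sqrt (sqnorm d u))\<^sup>2 \<le> (c * sqrt (sqnorm d v))\<^sup>2"
    by (intro power_mono) auto
  then show "sqnorm d (mat_vec d A v) \<le> c\<^sup>2 * sqnorm d v"
    by (simp add: u_def power_mult_distrib)
qed

lemma sum_lessThan_mult_split: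
  fixes f :: "nat \<Rightarrow> 'a::comm_monoid_add"
  shows "(\<Sum>p<k*n. f p) = (\<Sum>a<k. \<Sum>i<n. f (a*n+i))"
proof -
  have "(\<Sum>p<k*n. f p) = (\<Sum>a<k. sum f {a*n..<a*n+n})"
    using sum.nat_group[of f n k] by simp
  also have "\<dots> = (\<Sum>a<k. \<Sum>i<n. f (a*n+i))"
    by (rule sum.cong[OF refl]) (simp add: sum.atLeastLessThan_shift_0[of f] atLeast0LessThan comp_def)
  finally show ?thesis .
qed

lemma block_div_mod [simp]:
  fixes a i n :: nat
  assumes "i < n"
  shows "(a*n+i) div n = a" "(a*n+i) mod n = i"
  using assms by auto

lemma block_index_eq_iff:
  fixes a b i j n :: nat
  assumes "i < n" "j < n"
  shows "a*n+i = b*n+j \<longleftrightarrow> a = b \<and> i = j"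
  using assms by (metis block_div_mod)

text \<open>An element of \<open>\<complex>\<^sup>k \<otimes> \<complex>\<^sup>n\<close> is stored as \<open>W a i\<close>, its coordinate at index \<open>a*n+i\<close> of \<open>\<complex>\<^sup>k\<^sup>n\<close>.\<close>

definition flatten :: "nat \<Rightarrow> cmatrix \<Rightarrow> nat \<Rightarrow> complex" where
  "flatten n W = (\<lambda>p. W (p div n) (p mod n))"

definition block_sqnorm :: "nat \<Rightarrow> nat \<Rightarrow> cmatrix \<Rightarrow> real" where
  "block_sqnorm k n W = (\<Sum>a<k. \<Sum>i<n. (cmod (W a i))\<^sup>2)"

definition block_inner :: "nat \<Rightarrow> nat \<Rightarrow> cmatrix \<Rightarrow> cmatrix \<Rightarrow> cmatrix \<Rightarrow> complex" where
  "block_inner k n X W Z = (\<Sum>a<k. \<Sum>i<n. \<Sum>b<k. \<Sum>j<n. cnj (W a i) * X (a*n+i) (b*n+j) * Z b j)"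

lemma block_sqnorm_nonneg [simp]: "0 \<le> block_sqnorm k n W"
  by (simp add: block_sqnorm_def sum_nonneg)

lemma block_sqnorm_eq_sqnorm: "0 < n \<Longrightarrow> block_sqnorm k n W = sqnorm (k*n) (flatten n W)"
  by (simp add: sum_lessThan_mult_split sqnorm_def block_sqnorm_def flatten_def)

lemma block_inner_eq_inner:
  assumes "0 < n"
  shows "block_inner k n X W Z = (\<Sum>p<k*n. cnj (flatten n W p) * mat_vec (k*n) X (flatten n Z) p)"
  using assms
  by (simp add: sum_lessThan_mult_split mat_vec_def flatten_def block_inner_def
      sum_distrib_left mult.assoc)

lemma block_inner_bound:
  assumes "0 < n" "mat_op_norm (k*n) X \<le> 1"
  shows "cmod (block_inner k n X W Z) \<le> sqrt (block_sqnorm k n W) * sqrt (block_sqnorm k n Z)"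
  using inner_mat_vec_le[OF assms(2), of "flatten n W" "flatten n Z"] assms(1)
  by (simp add: block_inner_eq_inner block_sqnorm_eq_sqnorm)

lemma block_inner_add_left:
  "block_inner k n X (\<lambda>a i. W a i + W' a i) Z = block_inner k n X W Z + block_inner k n X W' Z"
  by (simp add: block_inner_def ring_distribs sum.distrib)

lemma block_inner_add_right:
  "block_inner k n X W (\<lambda>a i. Z a i + Z' a i) = block_inner k n X W Z + block_inner k n X W Z'"
  by (simp add: block_inner_def ring_distribs sum.distrib)

lemma block_inner_scale_left: "block_inner k n X (\<lambda>a i. c * W a i) Z = cnj c * block_inner k n X W Z"
  by (simp add: block_inner_def sum_distrib_left mult.assoc)

lemma block_inner_scale_right: "block_inner k n X W (\<lambda>a i. c * Z a i) = c * block_inner k n X W Z"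
  by (simp add: block_inner_def sum_distrib_left algebra_simps)

definition tensor_unit :: "nat \<Rightarrow> (nat \<Rightarrow> complex) \<Rightarrow> cmatrix" where
  "tensor_unit t x = (\<lambda>a i. if i = t then x a else 0)"

lemma block_inner_tensor_unit:
  assumes "s < n" "t < n"
  shows "block_inner k n X (tensor_unit s x) (tensor_unit t y)
           = (\<Sum>a<k. \<Sum>b<k. cnj (x a) * X (a*n+s) (b*n+t) * y b)"
proof -
  have sum_if: "(\<Sum>b\<in>B. if P then f b else 0) = (if P then \<Sum>b\<in>B. f b else 0)"
    for P and B :: "nat set" and f :: "nat \<Rightarrow> complex"
    by simp
  show ?thesis
    using assms
    by (simp add: block_inner_def tensor_unit_def if_distrib[of "\<lambda>u. u * _"]
        if_distrib[of "\<lambda>u. _ * u"] if_distrib[of cnj] sum_if sum.delta sum.delta' cong: if_cong)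
qed

subsection \<open>Averaging over Kraus operators of the Werner channels\<close>

lemma sum_sqrt_mult_le:
  assumes "\<And>x. x \<in> S \<Longrightarrow> 0 \<le> f x" "\<And>x. x \<in> S \<Longrightarrow> 0 \<le> g x"
  shows "(\<Sum>x\<in>S. sqrt (f x) * sqrt (g x)) \<le> sqrt (\<Sum>x\<in>S. f x) * sqrt (\<Sum>x\<in>S. g x)"
proof -
  have "(\<Sum>x\<in>S. sqrt (f x) * sqrt (g x)) = (\<Sum>x\<in>S. \<bar>sqrt (f x)\<bar> * \<bar>sqrt (g x)\<bar>)"
    using assms by (intro sum.cong) auto
  also have "\<dots> \<le> L2_set (\<lambda>x. sqrt (f x)) S * L2_set (\<lambda>x. sqrt (g x)) S"
    by (rule L2_set_mult_ineq)
  also have "\<dots> = sqrt (\<Sum>x\<in>S. f x) * sqrt (\<Sum>x\<in>S. g x)"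
    using assms by (simp add: L2_set_def cong: sum.cong)
  finally show ?thesis .
qed

lemma sum_reorder4:
  "(\<Sum>s\<in>S. \<Sum>t\<in>T. \<Sum>a\<in>A. \<Sum>b\<in>B. f s t a b) = (\<Sum>a\<in>A. \<Sum>s\<in>S. \<Sum>b\<in>B. \<Sum>t\<in>T. f s t a b)"
proof -
  have "(\<Sum>s\<in>S. \<Sum>t\<in>T. \<Sum>a\<in>A. \<Sum>b\<in>B. f s t a b) = (\<Sum>s\<in>S. \<Sum>a\<in>A. \<Sum>t\<in>T. \<Sum>b\<in>B. f s t a b)"
    by (rule sum.cong[OF refl], rule sum.swap)
  also have "\<dots> = (\<Sum>a\<in>A. \<Sum>s\<in>S. \<Sum>t\<in>T. \<Sum>b\<in>B. f s t a b)"
    by (rule sum.swap)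
  also have "\<dots> = (\<Sum>a\<in>A. \<Sum>s\<in>S. \<Sum>b\<in>B. \<Sum>t\<in>T. f s t a b)"
    by (rule sum.cong[OF refl], rule sum.cong[OF refl], rule sum.swap)
  finally show ?thesis .
qed

definition trace_form :: "nat \<Rightarrow> nat \<Rightarrow> cmatrix \<Rightarrow> cmatrix \<Rightarrow> cmatrix \<Rightarrow> complex" where
  "trace_form k n X U V = (\<Sum>a<k. \<Sum>s<n. \<Sum>b<k. \<Sum>t<n. cnj (U a s) * X (a*n+t) (b*n+t) * V b s)"

definition swap_form :: "nat \<Rightarrow> nat \<Rightarrow> cmatrix \<Rightarrow> cmatrix \<Rightarrow> cmatrix \<Rightarrow> complex" where
  "swap_form k n X U V = (\<Sum>a<k. \<Sum>s<n. \<Sum>b<k. \<Sum>t<n. cnj (U a s) * X (a*n+t) (b*n+s) * V b t)"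

text \<open>For \<open>r = \<plusminus>1\<close> these are the images of \<open>W\<close> under the Kraus operators
  \<open>1 \<otimes> (E\<^sub>t\<^sub>s \<plusminus> E\<^sub>s\<^sub>t)\<close> of the Werner channels.\<close>

definition kraus_image :: "complex \<Rightarrow> nat \<Rightarrow> nat \<Rightarrow> cmatrix \<Rightarrow> cmatrix" where
  "kraus_image r s t W = (\<lambda>a i. tensor_unit t (\<lambda>a. W a s) a i + r * tensor_unit s (\<lambda>a. W a t) a i)"

lemma sum_kraus_image_inner:
  "(\<Sum>s<n. \<Sum>t<n. block_inner k n X (kraus_image r s t U) (kraus_image r s t V))
    = (1 + cnj r * r) * trace_form k n X U V + (r + cnj r) * swap_form k n X U V"
proof -
  let ?G = "\<lambda>s t. \<Sum>a<k. \<Sum>b<k. cnj (U a s) * X (a*n+t) (b*n+t) * V b s"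
  let ?H = "\<lambda>s t. \<Sum>a<k. \<Sum>b<k. cnj (U a s) * X (a*n+t) (b*n+s) * V b t"
  have "block_inner k n X (kraus_image r s t U) (kraus_image r s t V)
          = ?G s t + r * ?H s t + cnj r * ?H t s + cnj r * r * ?G t s"
    if "s < n" "t < n" for s t
    using that
    by (simp add: kraus_image_def block_inner_add_left block_inner_add_right block_inner_scale_left
        block_inner_scale_right block_inner_tensor_unit algebra_simps)
  then have "(\<Sum>s<n. \<Sum>t<n. block_inner k n X (kraus_image r s t U) (kraus_image r s t V))
      = (\<Sum>s<n. \<Sum>t<n. ?G s t) + r * (\<Sum>s<n. \<Sum>t<n. ?H s t)
        + cnj r * (\<Sum>s<n. \<Sum>t<n. ?H t s) + cnj r * r * (\<Sum>s<n. \<Sum>t<n. ?G t s)"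
    by (simp add: sum.distrib sum_distrib_left)
  also have "(\<Sum>s<n. \<Sum>t<n. ?H t s) = (\<Sum>s<n. \<Sum>t<n. ?H s t)"
    by (rule sum.swap)
  also have "(\<Sum>s<n. \<Sum>t<n. ?G t s) = (\<Sum>s<n. \<Sum>t<n. ?G s t)"
    by (rule sum.swap)
  also have "(\<Sum>s<n. \<Sum>t<n. ?G s t) = trace_form k n X U V"
    unfolding trace_form_def by (rule sum_reorder4)
  also have "(\<Sum>s<n. \<Sum>t<n. ?H s t) = swap_form k n X U V"
    unfolding swap_form_def by (rule sum_reorder4)
  finally show ?thesis by (simp add: algebra_simps)
qed

lemma sqnorm_kraus_image_block:
  fixes \<sigma> :: real
  assumes "\<sigma> = 1 \<or> \<sigma> = -1" "s < n" "t < n"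
  shows "(\<Sum>i<n. (cmod (kraus_image \<sigma> s t W b i))\<^sup>2)
      = (cmod (W b s))\<^sup>2 + (cmod (W b t))\<^sup>2 + (if s = t then 2 * \<sigma> * (cmod (W b s))\<^sup>2 else 0)"
proof (cases "s = t")
  case True
  have "(\<Sum>i<n. (cmod (kraus_image \<sigma> s t W b i))\<^sup>2)
          = (\<Sum>i<n. if i = t then (cmod ((1 + complex_of_real \<sigma>) * W b t))\<^sup>2 else 0)"
    using True by (intro sum.cong) (auto simp: kraus_image_def tensor_unit_def algebra_simps)
  also have "\<dots> = (1 + \<sigma>)\<^sup>2 * (cmod (W b t))\<^sup>2"
    using assms by (auto simp: norm_mult power_mult_distrib)
  finally show ?thesis
    using True assms(1) by (auto simp: power2_eq_square algebra_simps)
next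
  case False
  have "(\<Sum>i<n. (cmod (kraus_image \<sigma> s t W b i))\<^sup>2)
          = (\<Sum>i<n. (if i = t then (cmod (W b s))\<^sup>2 else 0) + (if i = s then (cmod (W b t))\<^sup>2 else 0))"
    using False assms(1) by (intro sum.cong) (auto simp: kraus_image_def tensor_unit_def norm_mult)
  then show ?thesis
    using False assms by (simp add: sum.distrib)
qed

lemma sum_sqnorm_kraus_image:
  fixes \<sigma> :: real
  assumes "\<sigma> = 1 \<or> \<sigma> = -1"
  shows "(\<Sum>s<n. \<Sum>t<n. block_sqnorm k n (kraus_image \<sigma> s t W)) = 2 * (real n + \<sigma>) * block_sqnorm k n W"
proof -
  define N where "N = (\<Sum>s<n. \<Sum>b<k. (cmod (W b s))\<^sup>2)"
  have "block_sqnorm k n (kraus_image \<sigma> s t W)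
          = (\<Sum>b<k. (cmod (W b s))\<^sup>2) + (\<Sum>b<k. (cmod (W b t))\<^sup>2)
            + (if s = t then 2 * \<sigma> * (\<Sum>b<k. (cmod (W b s))\<^sup>2) else 0)"
    if "s < n" "t < n" for s t
    unfolding block_sqnorm_def
    by (simp add: sqnorm_kraus_image_block[OF assms that] sum.distrib sum_distrib_left)
  then have "(\<Sum>s<n. \<Sum>t<n. block_sqnorm k n (kraus_image \<sigma> s t W))
      = (\<Sum>s<n. \<Sum>t<n. \<Sum>b<k. (cmod (W b s))\<^sup>2)
        + (\<Sum>s<n. \<Sum>t<n. \<Sum>b<k. (cmod (W b t))\<^sup>2)
        + (\<Sum>s<n. \<Sum>t<n. if s = t then 2 * \<sigma> * (\<Sum>b<k. (cmod (W b s))\<^sup>2) else 0)"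
    by (simp add: sum.distrib)
  also have "\<dots> = real n * N + real n * N + 2 * \<sigma> * N"
    unfolding N_def by (simp add: sum_distrib_left flip: sum.swap[of _ "{..<k}"])
  also have "N = block_sqnorm k n W"
    unfolding N_def block_sqnorm_def by (rule sum.swap)
  finally show ?thesis by (simp add: algebra_simps)
qed

lemma trace_swap_form_bound:
  fixes \<sigma> :: real
  assumes "\<sigma> = 1 \<or> \<sigma> = -1" "0 < n" "mat_op_norm (k*n) X \<le> 1"
  shows "cmod (trace_form k n X U V + \<sigma> * swap_form k n X U V)
           \<le> (real n + \<sigma>) * (sqrt (block_sqnorm k n U) * sqrt (block_sqnorm k n V))"
proof -
  let ?I = "\<lambda>s t. block_inner k n X (kraus_image \<sigma> s t U) (kraus_image \<sigma> s t V)"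
  let ?nU = "\<lambda>st. block_sqnorm k n (kraus_image \<sigma> (fst st) (snd st) U)"
  let ?nV = "\<lambda>st. block_sqnorm k n (kraus_image \<sigma> (fst st) (snd st) V)"
  have "2 * (trace_form k n X U V + \<sigma> * swap_form k n X U V) = (\<Sum>s<n. \<Sum>t<n. ?I s t)"
    using assms(1) by (auto simp: sum_kraus_image_inner algebra_simps)
  then have "2 * cmod (trace_form k n X U V + \<sigma> * swap_form k n X U V) = cmod (\<Sum>s<n. \<Sum>t<n. ?I s t)"
    by (metis norm_mult norm_numeral)
  also have "\<dots> = cmod (\<Sum>st\<in>{..<n} \<times> {..<n}. ?I (fst st) (snd st))"
    by (simp add: sum.cartesian_product split_def)
  also have "\<dots> \<le> (\<Sum>st\<in>{..<n} \<times> {..<n}. cmod (?I (fst st) (snd st)))"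
    by (rule norm_sum)
  also have "\<dots> \<le> (\<Sum>st\<in>{..<n} \<times> {..<n}. sqrt (?nU st) * sqrt (?nV st))"
    by (intro sum_mono block_inner_bound assms)
  also have "\<dots> \<le> sqrt (\<Sum>st\<in>{..<n} \<times> {..<n}. ?nU st) * sqrt (\<Sum>st\<in>{..<n} \<times> {..<n}. ?nV st)"
    by (rule sum_sqrt_mult_le) auto
  also have "\<dots> = sqrt (2 * (real n + \<sigma>) * block_sqnorm k n U) * sqrt (2 * (real n + \<sigma>) * block_sqnorm k n V)"
    using sum.cartesian_product[of "\<lambda>s t. block_sqnorm k n (kraus_image \<sigma> s t _)" "{..<n}" "{..<n}"]
    by (simp add: split_def sum_sqnorm_kraus_image[OF assms(1)])
  also have "\<dots> = 2 * ((real n + \<sigma>) * (sqrt (block_sqnorm k n U) * sqrt (block_sqnorm k n V)))"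
    using assms(1,2) by (auto simp: real_sqrt_mult)
  finally show ?thesis by linarith
qed

subsection \<open>Upper bound\<close>

abbreviation HW_diff :: "nat \<Rightarrow> cmatrix \<Rightarrow> cmatrix" where
  "HW_diff n \<equiv> (\<lambda>x i j. HW_plus n x i j - HW_minus n x i j)"

lemma ampl_HW_diff_entry:
  assumes "i < n" "j < n"
  shows "ampl n (HW_diff n) X (a*n+i) (b*n+j)
    = ((if i = j then \<Sum>m<n. X (a*n+m) (b*n+m) else 0) + X (a*n+j) (b*n+i)) / (of_nat n + 1)
    - ((if i = j then \<Sum>m<n. X (a*n+m) (b*n+m) else 0) - X (a*n+j) (b*n+i)) / (of_nat n - 1)"
proof -
  have "(\<Sum>m<n. if m < n then f m else 0) = (\<Sum>m<n. f m)" for f :: "nat \<Rightarrow> complex"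
    by (rule sum.cong) auto
  then show ?thesis
    using assms by (simp add: ampl_def HW_plus_def HW_minus_def mtrace_def block_div_mod)
qed

lemma block_inner_ampl_HW_diff:
  "block_inner k n (ampl n (HW_diff n) X) U V
     = (trace_form k n X U V + swap_form k n X U V) / (of_nat n + 1)
     - (trace_form k n X U V - swap_form k n X U V) / (of_nat n - 1)"
proof -
  define T where "T a i b j = (if i = j then cnj (U a i) * (\<Sum>m<n. X (a*n+m) (b*n+m)) * V b j else 0)"
    for a i b j
  define S where "S a i b j = cnj (U a i) * X (a*n+j) (b*n+i) * V b j" for a i b j
  have "block_inner k n (ampl n (HW_diff n) X) U V
      = (\<Sum>a<k. \<Sum>i<n. \<Sum>b<k. \<Sum>j<n. (T a i b j + S a i b j) / (of_nat n + 1)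
                                       - (T a i b j - S a i b j) / (of_nat n - 1))"
    unfolding block_inner_def T_def S_def
    by (intro sum.cong refl) (simp only: lessThan_iff ampl_HW_diff_entry,
        simp add: algebra_simps diff_divide_distrib add_divide_distrib)
  also have "\<dots> = ((\<Sum>a<k. \<Sum>i<n. \<Sum>b<k. \<Sum>j<n. T a i b j) + (\<Sum>a<k. \<Sum>i<n. \<Sum>b<k. \<Sum>j<n. S a i b j))
                     / (of_nat n + 1)
                 - ((\<Sum>a<k. \<Sum>i<n. \<Sum>b<k. \<Sum>j<n. T a i b j) - (\<Sum>a<k. \<Sum>i<n. \<Sum>b<k. \<Sum>j<n. S a i b j))
                     / (of_nat n - 1)"
    by (simp add: sum_subtractf sum.distrib flip: sum_divide_distrib)
  also have "(\<Sum>a<k. \<Sum>i<n. \<Sum>b<k. \<Sum>j<n. T a i b j) = trace_form k n X U V"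
  proof -
    have "(\<Sum>j<n. T a i b j) = cnj (U a i) * (\<Sum>m<n. X (a*n+m) (b*n+m)) * V b i"
      if "i < n" for a i b
      using that by (simp add: T_def)
    then have "(\<Sum>a<k. \<Sum>i<n. \<Sum>b<k. \<Sum>j<n. T a i b j)
               = (\<Sum>a<k. \<Sum>i<n. \<Sum>b<k. cnj (U a i) * (\<Sum>m<n. X (a*n+m) (b*n+m)) * V b i)"
      by (intro sum.cong refl) simp
    then show ?thesis
      by (simp add: trace_form_def sum_distrib_left sum_distrib_right mult.assoc)
  qed
  also have "(\<Sum>a<k. \<Sum>i<n. \<Sum>b<k. \<Sum>j<n. S a i b j) = swap_form k n X U V"
    by (simp add: S_def swap_form_def)
  finally show ?thesis .
qed

lemma cmod_block_inner_ampl_HW_diff_le: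
  assumes "2 \<le> n" "mat_op_norm (k*n) X \<le> 1"
  shows "cmod (block_inner k n (ampl n (HW_diff n) X) U V)
           \<le> 2 * sqrt (block_sqnorm k n U) * sqrt (block_sqnorm k n V)"
proof -
  let ?S = "sqrt (block_sqnorm k n U) * sqrt (block_sqnorm k n V)"
  let ?T1 = "trace_form k n X U V" and ?T2 = "swap_form k n X U V"
  have "cmod (?T1 + ?T2) \<le> (real n + 1) * ?S"
    using trace_swap_form_bound[of 1 n k X U V] assms by simp
  moreover have "cmod (of_nat n + 1 :: complex) = real n + 1"
    using norm_of_nat[of "Suc n", where 'a = complex] by (simp add: add.commute)
  ultimately have plus: "cmod ((?T1 + ?T2) / (of_nat n + 1)) \<le> ?S"
    by (simp add: norm_divide divide_le_eq mult.commute)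
  have "cmod (?T1 - ?T2) \<le> (real n - 1) * ?S"
    using trace_swap_form_bound[of "-1" n k X U V] assms by simp
  moreover have "cmod (of_nat n - 1 :: complex) = real n - 1"
  proof -
    have "(of_nat n - 1 :: complex) = of_real (real n - 1)" by simp
    then show ?thesis using assms(1) by (simp only: norm_of_real)
  qed
  ultimately have minus: "cmod ((?T1 - ?T2) / (of_nat n - 1)) \<le> ?S"
    using assms(1) by (simp add: norm_divide divide_le_eq mult.commute)
  show ?thesis
    unfolding block_inner_ampl_HW_diff
    using norm_triangle_ineq4[of "(?T1 + ?T2) / (of_nat n + 1)" "(?T1 - ?T2) / (of_nat n - 1)"] plus minus
    by simp
qed

lemma mat_op_norm_ampl_HW_diff_le:
  assumes "2 \<le> n" "mat_op_norm (k*n) X \<le> 1"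
  shows "mat_op_norm (k*n) (ampl n (HW_diff n) X) \<le> 2"
proof (rule mat_op_norm_le_by_inner)
  fix w z :: "nat \<Rightarrow> complex"
  have "0 < n" using assms(1) by simp
  have flat: "flatten n (\<lambda>a i. x (a*n+i)) = x" for x :: "nat \<Rightarrow> complex"
    using \<open>0 < n\<close> by (simp add: flatten_def)
  show "cmod (\<Sum>p<k*n. cnj (w p) * mat_vec (k*n) (ampl n (HW_diff n) X) z p)
          \<le> 2 * sqrt (sqnorm (k*n) w) * sqrt (sqnorm (k*n) z)"
    using cmod_block_inner_ampl_HW_diff_le[OF assms, of "\<lambda>a i. w (a*n+i)" "\<lambda>a i. z (a*n+i)"] \<open>0 < n\<close>
    by (simp add: block_inner_eq_inner block_sqnorm_eq_sqnorm flat)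
qed simp

lemma ampl_norm_HW_diff_le:
  assumes "2 \<le> n"
  shows "ampl_norm k n (HW_diff n) \<le> 2"
  unfolding ampl_norm_def
proof (rule cSup_least)
  have "mat_op_norm (k*n) (\<lambda>_ _. 0) \<le> 1"
    by (rule mat_op_norm_leI) (simp_all add: mat_vec_def sqnorm_def sum_nonneg)
  then show "{mat_op_norm (k*n) (ampl n (HW_diff n) X) |X. mat_op_norm (k*n) X \<le> 1} \<noteq> {}"
    by blast
qed (use mat_op_norm_ampl_HW_diff_le[OF assms] in blast)

subsection \<open>Lower bound\<close>

definition flip_unitary :: "nat \<Rightarrow> cmatrix" where
  "flip_unitary n = (\<lambda>p q. if q = (p mod n) * n + p div n then 1 else 0)"

lemma flip_unitary_block_entry:
  assumes "a < n" "b < n" "i < n" "j < n"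
  shows "flip_unitary n (a*n+i) (b*n+j) = (if b = i \<and> j = a then 1 else 0)"
  using assms by (simp add: flip_unitary_def block_index_eq_iff)

lemma mat_op_norm_flip_unitary_le: "0 < n \<Longrightarrow> mat_op_norm (n*n) (flip_unitary n) \<le> 1"
proof (rule mat_op_norm_leI)
  fix v
  assume "0 < n"
  have swap_lt: "p mod n * n + p div n < n*n" if "p < n*n" for p
  proof -
    have "p div n < n" "p mod n < n"
      using that \<open>0 < n\<close> by (simp_all add: less_mult_imp_div_less)
    then have "p mod n * n + p div n < (p mod n + 1) * n" by simp
    also have "\<dots> \<le> n * n" using \<open>p mod n < n\<close> by (intro mult_right_mono) auto
    finally show ?thesis .
  qed
  have "sqnorm (n*n) (mat_vec (n*n) (flip_unitary n) v) = (\<Sum>p<n*n. (cmod (v (p mod n * n + p div n)))\<^sup>2)"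
    unfolding sqnorm_def mat_vec_def flip_unitary_def using swap_lt
    by (intro sum.cong refl) (simp add: if_distrib[of "\<lambda>u. u * _"] sum.delta cong: if_cong)
  also have "\<dots> = (\<Sum>i<n. \<Sum>a<n. (cmod (v (a * n + i)))\<^sup>2)"
    by (simp add: sum_lessThan_mult_split)
  also have "\<dots> = sqnorm (n*n) v"
    by (subst sum.swap) (simp add: sum_lessThan_mult_split sqnorm_def)
  finally show "sqnorm (n*n) (mat_vec (n*n) (flip_unitary n) v) \<le> 1\<^sup>2 * sqnorm (n*n) v" by simp
qed simp

lemma ampl_HW_diff_flip_unitary_diagonal_sum:
  assumes "2 \<le> n" "a < n" "i < n"
  shows "(\<Sum>b<n. ampl n (HW_diff n) (flip_unitary n) (a*n+i) (b*n+b)) = (if i = a then 2 else 0)"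
proof -
  have trace: "(\<Sum>m<n. flip_unitary n (a*n+m) (b*n+m)) = (if a = b then 1 else 0)" if "b < n" for b
  proof -
    have "(\<Sum>m<n. flip_unitary n (a*n+m) (b*n+m)) = (\<Sum>m<n. if m = a then (if a = b then 1 else 0) else 0)"
      using assms that by (intro sum.cong refl) (auto simp: flip_unitary_block_entry)
    then show ?thesis using assms by simp
  qed
  have entry: "ampl n (HW_diff n) (flip_unitary n) (a*n+i) (b*n+b)
      = ((if i = b \<and> a = b then 1 else 0) + (if i = a then 1 else 0)) / (of_nat n + 1)
        - ((if i = b \<and> a = b then 1 else 0) - (if i = a then 1 else 0)) / (of_nat n - 1)"
    if "b < n" for b
    using assms that by (simp only: ampl_HW_diff_entry trace) (simp add: flip_unitary_block_entry)
  have nonzero: "(of_nat n - 1 :: complex) \<noteq> 0" "(of_nat n + 1 :: complex) \<noteq> 0"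
    using assms(1) of_nat_neq_0[of n, where 'a = complex] by (simp_all add: add.commute)
  show ?thesis
  proof (cases "i = a")
    case True
    have "(\<Sum>b<n. ampl n (HW_diff n) (flip_unitary n) (a*n+i) (b*n+b))
        = (\<Sum>b<n. ((if b = a then 1 else 0) + 1) / (of_nat n + 1)
                   - ((if b = a then 1 else 0) - 1) / (of_nat n - 1))"
      using entry True by (intro sum.cong refl) auto
    also have "\<dots> = (1 + of_nat n) / (of_nat n + 1) - (1 - of_nat n) / (of_nat n - 1)"
      using assms by (simp add: sum_subtractf sum.distrib sum.delta flip: sum_divide_distrib)
    also have "\<dots> = 2"
      using nonzero by (simp add: field_simps)
    finally show ?thesis using True by simp
  next
    case False
    then have "(\<Sum>b<n. ampl n (HW_diff n) (flip_unitary n) (a*n+i) (b*n+b)) = (\<Sum>b<n. 0)"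
      using entry by (intro sum.cong refl) auto
    then show ?thesis using False by simp
  qed
qed

definition max_entangled :: "nat \<Rightarrow> nat \<Rightarrow> complex" where
  "max_entangled n p = (if p div n = p mod n then 1 else 0)"

lemma mat_vec_ampl_HW_diff_flip_unitary:
  assumes "2 \<le> n" "p < n*n"
  shows "mat_vec (n*n) (ampl n (HW_diff n) (flip_unitary n)) (max_entangled n) p = 2 * max_entangled n p"
proof -
  let ?Y = "ampl n (HW_diff n) (flip_unitary n)"
  have p: "p div n < n" "p mod n < n" "p = p div n * n + p mod n"
    using assms by (simp_all add: less_mult_imp_div_less)
  have "mat_vec (n*n) ?Y (max_entangled n) p = (\<Sum>b<n. ?Y p (b*n+b))"
    unfolding mat_vec_def max_entangled_def
    by (simp add: sum_lessThan_mult_split if_distrib[of "\<lambda>u. _ * u"] cong: if_cong)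
  also have "\<dots> = (\<Sum>b<n. ?Y (p div n * n + p mod n) (b*n+b))"
    using p(3) by simp
  also have "\<dots> = (if p mod n = p div n then 2 else 0)"
    by (rule ampl_HW_diff_flip_unitary_diagonal_sum[OF assms(1) p(1,2)])
  finally show ?thesis by (auto simp: max_entangled_def)
qed

lemma mat_op_norm_ampl_HW_diff_flip_unitary_ge:
  assumes "2 \<le> n"
  shows "2 \<le> mat_op_norm (n*n) (ampl n (HW_diff n) (flip_unitary n))"
proof (rule mat_op_norm_geI)
  have "(cmod (max_entangled n 0))\<^sup>2 \<le> sqnorm (n*n) (max_entangled n)"
    unfolding sqnorm_def by (rule member_le_sum) (use assms in auto)
  then show "0 < sqnorm (n*n) (max_entangled n)"
    by (simp add: max_entangled_def)
  have "sqnorm (n*n) (mat_vec (n*n) (ampl n (HW_diff n) (flip_unitary n)) (max_entangled n))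
          = sqnorm (n*n) (\<lambda>p. 2 * max_entangled n p)"
    unfolding sqnorm_def using mat_vec_ampl_HW_diff_flip_unitary[OF assms] by simp
  then show "2 * sqrt (sqnorm (n*n) (max_entangled n))
      \<le> sqrt (sqnorm (n*n) (mat_vec (n*n) (ampl n (HW_diff n) (flip_unitary n)) (max_entangled n)))"
    by (simp add: sqnorm_scale real_sqrt_mult)
qed

lemma ampl_norm_HW_diff_square:
  assumes "2 \<le> n"
  shows "ampl_norm n n (HW_diff n) = 2"
proof (rule antisym)
  show "ampl_norm n n (HW_diff n) \<le> 2"
    by (rule ampl_norm_HW_diff_le[OF assms])
  have "bdd_above {mat_op_norm (n*n) (ampl n (HW_diff n) X) |X. mat_op_norm (n*n) X \<le> 1}"
    using mat_op_norm_ampl_HW_diff_le[OF assms] by (intro bdd_aboveI[of _ 2]) blast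
  moreover have "mat_op_norm (n*n) (flip_unitary n) \<le> 1"
    using assms by (simp add: mat_op_norm_flip_unitary_le)
  ultimately have "mat_op_norm (n*n) (ampl n (HW_diff n) (flip_unitary n)) \<le> ampl_norm n n (HW_diff n)"
    unfolding ampl_norm_def by (intro cSup_upper) blast+
  then show "2 \<le> ampl_norm n n (HW_diff n)"
    using mat_op_norm_ampl_HW_diff_flip_unitary_ge[OF assms] by linarith
qed

theorem lemma4p8:
  fixes n :: nat
  assumes "n \<ge> 2"
  shows "cb_norm n (\<lambda>x i j. HW_plus n x i j - HW_minus n x i j) = 2"
  unfolding cb_norm_def
proof (rule antisym)
  show "(SUP k\<in>{1..}. ereal (ampl_norm k n (HW_diff n))) \<le> 2"
    using ampl_norm_HW_diff_le[OF assms] by (intro SUP_least) simp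
  have "ereal (ampl_norm n n (HW_diff n)) \<le> (SUP k\<in>{1..}. ereal (ampl_norm k n (HW_diff n)))"
    using assms by (intro SUP_upper) simp
  then show "2 \<le> (SUP k\<in>{1..}. ereal (ampl_norm k n (HW_diff n)))"
    by (simp add: ampl_norm_HW_diff_square[OF assms])
qed

end
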